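(* Let $G=\langle V,E_s\rangle$ be an undirected graph with $V=\{1,\dots,n\}$, where edges are treated as bidirected (so $(i,j)\in E_s$ iff $(j,i)\in E_s$, and there are no loops). Let $\mu_{ij}=\mu_{ji}\ge 0$ ($i\neq j$) be requirements, and let $\delta=(\delta_1,\dots,\delta_n)$ be a sequence of positive integers with $\sum_i\delta_i=2(n-1)$ such that $G$ has at least one spanning tree in which every vertex $i$ has degree $\delta_i$ (call such spanning trees admissible). Let $m=|\{i:\delta_i>1\}|$ and $L=m+2$. For a spanning tree $T$ let $C_A(T)=\sum_{i\neq j}\mu_{ij}d_T(i,j)$, where $d_T(i,j)$ is the number of edges of the path from $i$ to $j$ in $T$; an admissible tree minimizing $C_A$ is called optimal. Consider the problem (relaxed F2Q) in variables $x_{ij}=x_{ji}\in\{0,1\}$ for $(i,j)\in E_s$ and $w^{(\ell)}_{ij}=w^{(\ell)}_{ji}\in[0,1]$ for $i\neq j\in V$, $\ell\in\{1,\dots,L\}$: minimize $\displaystyle\sum_{i,j=1,\,i\neq j}^n \mu_{ij}\Big(L-\sum_{\ell=1}^{L-1} w^{(\ell)}_{ij}\Big)$ subject to - $w^{(1)}_{ij}=x_{ij}$ for all $(i,j)\in E_s$; - $w^{(1)}_{ij}=0$ for all $i<j$ with $(i,j)\notin E_s$; - $w^{(\ell)}_{ij}\le x_{ij}+\sum_{k\neq j:(i,k)\in E_s}x_{ik}w^{(\ell-1)}_{kj}$ for all $(i,j)\in E_s$, $i<j$, $\ell\in\{2,\dots,L\}$; - $w^{(\ell)}_{ij}\le \sum_{k\neq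 j:(i,k)\in E_s}x_{ik}w^{(\ell-1)}_{kj}$ for all $i<j$ with $(i,j)\notin E_s$, $\ell\in\{2,\dots,L\}$; - $w^{(L)}_{ij}=1$ for all $i<j$; - $\sum_{j:(i,j)\in E_s}x_{ij}=\delta_i$ for all $i\in V$. Then there exists an optimal solution $(x^*,w^* )$ of this problem such that the edges $\{(i,j)\in E_s: x^*_{ij}=1\}$ form an optimal tree $T^*$ and the optimal objective value equals $C_A(T^* )$.
   Context: The variables $w^{(\ell)}_{ij}$ are intended to indicate whether vertices $i$ and $j$ are joined by a path of length at most $\ell$ in the selected tree; in the unrelaxed problem they are binary, here they are relaxed to $[0,1]$ while $x$ stays binary. *)

theory Defs
  imports Main "HOL-Library.Extended_Real" Complex_Main
begin

definition walk :: "(nat \<times> nat) set \<Rightarrow> nat list \<Rightarrow> bool" where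
  "walk T xs \<longleftrightarrow> xs \<noteq> [] \<and> (\<forall>k. Suc k < length xs \<longrightarrow> (xs ! k, xs ! Suc k) \<in> T)"

definition connected_on :: "nat set \<Rightarrow> (nat \<times> nat) set \<Rightarrow> bool" where
  "connected_on V T \<longleftrightarrow> (\<forall>i\<in>V. \<forall>j\<in>V. \<exists>xs. walk T xs \<and> hd xs = i \<and> last xs = j)"

text \<open>A cycle: closed walk v0 .. vk = v0 with k >= 3 and v0..v(k-1) pairwise distinct.\<close>
definition has_cycle :: "(nat \<times> nat) set \<Rightarrow> bool" where
  "has_cycle T \<longleftrightarrow> (\<exists>xs. walk T xs \<and> length xs \<ge> 4 \<and> hd xs = last xs \<and> distinct (butlast xs))"

definition graph_on :: "nat set \<Rightarrow> (nat \<times> nat) set \<Rightarrow> bool" where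
  "graph_on V E \<longleftrightarrow> E \<subseteq> V \<times> V \<and> sym E \<and> (\<forall>i. (i, i) \<notin> E)"

definition spanning_tree :: "nat set \<Rightarrow> (nat \<times> nat) set \<Rightarrow> (nat \<times> nat) set \<Rightarrow> bool" where
  "spanning_tree V E T \<longleftrightarrow> T \<subseteq> E \<and> sym T \<and> connected_on V T \<and> \<not> has_cycle T"

definition vdeg :: "(nat \<times> nat) set \<Rightarrow> nat \<Rightarrow> nat" where
  "vdeg T i = card {j. (i, j) \<in> T}"

definition admissible :: "nat set \<Rightarrow> (nat \<times> nat) set \<Rightarrow> (nat \<Rightarrow> nat) \<Rightarrow> (nat \<times> nat) set \<Rightarrow> bool" where
  "admissible V E \<delta> T \<longleftrightarrow> spanning_tree V E T \<and> (\<forall>i\<in>V. vdeg T i = \<delta> i)"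

text \<open>Number of edges of the (unique, hence shortest) path from i to j in T.\<close>
definition tdist :: "(nat \<times> nat) set \<Rightarrow> nat \<Rightarrow> nat \<Rightarrow> nat" where
  "tdist T i j = (LEAST k. \<exists>xs. walk T xs \<and> hd xs = i \<and> last xs = j \<and> length xs = Suc k)"

definition CA :: "nat set \<Rightarrow> (nat \<Rightarrow> nat \<Rightarrow> real) \<Rightarrow> (nat \<times> nat) set \<Rightarrow> real" where
  "CA V \<mu> T = (\<Sum>i\<in>V. \<Sum>j\<in>V - {i}. \<mu> i j * real (tdist T i j))"

definition optimal_tree :: "nat set \<Rightarrow> (nat \<times> nat) set \<Rightarrow> (nat \<Rightarrow> nat) \<Rightarrow> (nat \<Rightarrow> nat \<Rightarrow> real)
    \<Rightarrow> (nat \<times> nat) set \<Rightarrow> bool" where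
  "optimal_tree V E \<delta> \<mu> T \<longleftrightarrow> admissible V E \<delta> T \<and>
     (\<forall>T'. admissible V E \<delta> T' \<longrightarrow> CA V \<mu> T \<le> CA V \<mu> T')"

definition F2Q_feasible :: "nat \<Rightarrow> (nat \<times> nat) set \<Rightarrow> (nat \<Rightarrow> nat) \<Rightarrow> nat
    \<Rightarrow> (nat \<Rightarrow> nat \<Rightarrow> real) \<Rightarrow> (nat \<Rightarrow> nat \<Rightarrow> nat \<Rightarrow> real) \<Rightarrow> bool" where
  "F2Q_feasible n E \<delta> L x w \<longleftrightarrow>
     (\<forall>(i, j)\<in>E. x i j \<in> {0, 1} \<and> x i j = x j i) \<and>
     (\<forall>i\<in>{1..n}. \<forall>j\<in>{1..n}. i \<noteq> j \<longrightarrow>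
        (\<forall>l\<in>{1..L}. w l i j = w l j i \<and> 0 \<le> w l i j \<and> w l i j \<le> 1)) \<and>
     (\<forall>(i, j)\<in>E. w 1 i j = x i j) \<and>
     (\<forall>i\<in>{1..n}. \<forall>j\<in>{1..n}. i < j \<and> (i, j) \<notin> E \<longrightarrow> w 1 i j = 0) \<and>
     (\<forall>(i, j)\<in>E. i < j \<longrightarrow> (\<forall>l\<in>{2..L}.
        w l i j \<le> x i j + (\<Sum>k\<in>{k\<in>{1..n}. k \<noteq> j \<and> (i, k) \<in> E}. x i k * w (l - 1) k j))) \<and>
     (\<forall>i\<in>{1..n}. \<forall>j\<in>{1..n}. i < j \<and> (i, j) \<notin> E \<longrightarrow> (\<forall>l\<in>{2..L}.
        w l i j \<le> (\<Sum>k\<in>{k\<in>{1..n}. k \<noteq> j \<and> (i, k) \<in> E}. x i k * w (l - 1) k j))) \<and>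
     (\<forall>i\<in>{1..n}. \<forall>j\<in>{1..n}. i < j \<longrightarrow> w L i j = 1) \<and>
     (\<forall>i\<in>{1..n}. (\<Sum>j\<in>{j\<in>{1..n}. (i, j) \<in> E}. x i j) = real (\<delta> i))"

definition F2Q_obj :: "nat \<Rightarrow> (nat \<Rightarrow> nat \<Rightarrow> real) \<Rightarrow> nat \<Rightarrow> (nat \<Rightarrow> nat \<Rightarrow> nat \<Rightarrow> real) \<Rightarrow> real" where
  "F2Q_obj n \<mu> L w = (\<Sum>i\<in>{1..n}. \<Sum>j\<in>{1..n} - {i}. \<mu> i j * (real L - (\<Sum>l\<in>{1..L-1}. w l i j)))"

end

theory Submission
  imports Defs
begin

text \<open>A tree T gives a feasible point: x is the edge indicator of T and w l i j is the
  indicator of T-distance at most l. Every inner vertex of a path in an admissible tree has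
  degree \<delta> > 1, so tree distances are at most m + 1 = L - 1, all constraints hold, and the
  objective equals CA(T).
  Conversely, for a feasible (x, w), induction on l shows that w l i j > 0 forces a path of
  length at most l between i and j in the selected edges. Since w L = 1, the selected edges are
  connected and the objective term of (i, j) is at least their distance. The degree constraints
  leave exactly n - 1 edges, which rules out a cycle, so the selected edges form an admissible
  tree whose CA is at most the objective. Hence the point built from an optimal tree is optimal.\<close>

lemma walk_Nil [simp]: "\<not> walk T []"
  by (simp add: walk_def)

lemma walk_singleton [simp]: "walk T [a]"
  by (simp add: walk_def)

lemma walk_Cons_Cons [simp]: "walk T (a # b # xs) \<longleftrightarrow> (a, b) \<in> T \<and> walk T (b # xs)"
  unfolding walk_def by (auto simp: All_less_Suc2)

lemma walk_append_iff: "walk T (xs @ y # ys) \<longleftrightarrow> walk T (xs @ [y]) \<and> walk T (y # ys)"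
  by (induction xs rule: induct_list012) auto

lemma walk_ConsI: "walk T ys \<Longrightarrow> (a, hd ys) \<in> T \<Longrightarrow> walk T (a # ys)"
  by (cases ys) auto

lemma walk_rev: "sym T \<Longrightarrow> walk T xs \<Longrightarrow> walk T (rev xs)"
proof (induction xs rule: induct_list012)
  case (3 a b xs)
  then have "walk T (rev xs @ [b])" and "(b, a) \<in> T"
    by (auto dest: symD)
  then show ?case
    using walk_append_iff[of T "rev xs" b "[a]"] by simp
qed simp_all

definition reachable :: "(nat \<times> nat) set \<Rightarrow> nat \<Rightarrow> nat \<Rightarrow> bool" where
  "reachable T i j \<longleftrightarrow> (\<exists>xs. walk T xs \<and> hd xs = i \<and> last xs = j)"

lemma connected_on_iff_reachable: "connected_on V T \<longleftrightarrow> (\<forall>i\<in>V. \<forall>j\<in>V. reachable T i j)"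
  by (simp add: connected_on_def reachable_def)

lemma reachable_refl [simp]: "reachable T i i"
  unfolding reachable_def by (rule exI[of _ "[i]"]) simp

lemma reachable_sym: "sym T \<Longrightarrow> reachable T i j \<Longrightarrow> reachable T j i"
  unfolding reachable_def by (metis walk_rev hd_rev last_rev)

lemma tdist_shortest_walk:
  assumes "reachable T i j"
  obtains xs where "walk T xs" "hd xs = i" "last xs = j" "length xs = Suc (tdist T i j)"
proof -
  obtain xs where "walk T xs" "hd xs = i" "last xs = j"
    using assms reachable_def by blast
  then have "\<exists>k xs. walk T xs \<and> hd xs = i \<and> last xs = j \<and> length xs = Suc k"
    by (metis length_Suc_conv list.exhaust walk_Nil)
  then have "\<exists>xs. walk T xs \<and> hd xs = i \<and> last xs = j \<and> length xs = Suc (tdist T i j)"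
    unfolding tdist_def by (rule LeastI_ex)
  with that show thesis
    by blast
qed

lemma tdist_le_walk:
  assumes "walk T xs" "hd xs = i" "last xs = j"
  shows "tdist T i j \<le> length xs - 1"
proof -
  have "length xs = Suc (length xs - 1)"
    using assms(1) by (cases xs) auto
  with assms show ?thesis
    unfolding tdist_def by (metis (mono_tags, lifting) Least_le)
qed

lemma tdist_refl [simp]: "tdist T i i = 0"
  using tdist_le_walk[of T "[i]" i i] by simp

lemma tdist_eq_0_iff: "reachable T i j \<Longrightarrow> tdist T i j = 0 \<longleftrightarrow> i = j"
  by (elim tdist_shortest_walk) (auto simp: length_Suc_conv)

lemma tdist_sym:
  assumes "sym T" "reachable T i j"
  shows "tdist T i j = tdist T j i"
proof -
  have "tdist T a b \<le> tdist T b a" if ba: "reachable T b a" for a b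
  proof -
    obtain xs where "walk T xs" "hd xs = b" "last xs = a" "length xs = Suc (tdist T b a)"
      using tdist_shortest_walk[OF ba] .
    then show ?thesis
      using tdist_le_walk[of T "rev xs" a b] walk_rev[OF assms(1)] by (simp add: hd_rev last_rev)
  qed
  then show ?thesis
    using assms reachable_sym by (simp add: le_antisym)
qed

lemma
  assumes "(i, k) \<in> T" "reachable T k j"
  shows reachable_Cons: "reachable T i j"
    and tdist_Cons_le: "tdist T i j \<le> Suc (tdist T k j)"
proof -
  obtain xs where xs: "walk T xs" "hd xs = k" "last xs = j" "length xs = Suc (tdist T k j)"
    using tdist_shortest_walk[OF assms(2)] .
  then have "walk T (i # xs)" "hd (i # xs) = i" "last (i # xs) = j"
    using assms(1) by (auto intro: walk_ConsI)
  then show "reachable T i j" "tdist T i j \<le> Suc (tdist T k j)"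
    unfolding reachable_def using tdist_le_walk xs(4) by fastforce+
qed

lemma tdist_edge_le: "(i, j) \<in> T \<Longrightarrow> tdist T i j \<le> 1"
  using tdist_le_walk[of T "[i, j]" i j] by simp

lemma tdist_eq_1D: "reachable T i j \<Longrightarrow> tdist T i j = 1 \<Longrightarrow> (i, j) \<in> T"
  by (elim tdist_shortest_walk) (auto simp: length_Suc_conv)

lemma tdist_le_1_iff:
  assumes "reachable T i j" "i \<noteq> j"
  shows "tdist T i j \<le> 1 \<longleftrightarrow> (i, j) \<in> T"
proof
  assume "tdist T i j \<le> 1"
  moreover have "tdist T i j \<noteq> 0"
    using tdist_eq_0_iff[OF assms(1)] assms(2) by simp
  ultimately show "(i, j) \<in> T"
    using tdist_eq_1D[OF assms(1)] by simp
qed (rule tdist_edge_le)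

lemma reachable_closer_neighbour:
  assumes "reachable T i j" "i \<noteq> j"
  obtains k where "(i, k) \<in> T" "reachable T k j" "tdist T k j < tdist T i j"
proof -
  obtain xs where xs: "walk T xs" "hd xs = i" "last xs = j" "length xs = Suc (tdist T i j)"
    using tdist_shortest_walk[OF assms(1)] .
  then obtain k ys where eq: "xs = i # k # ys"
    using assms(2) by (cases xs rule: remdups_adj.cases) auto
  with xs have "(i, k) \<in> T" "walk T (k # ys)" "last (k # ys) = j"
    by auto
  moreover have "tdist T k j < tdist T i j"
    using tdist_le_walk[OF calculation(2) _ calculation(3)] xs(4) eq by simp
  ultimately show thesis
    using that unfolding reachable_def by fastforce
qed

lemma shortest_walk_distinct:
  assumes "walk T xs" "hd xs = i" "last xs = j" "length xs = Suc (tdist T i j)"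
  shows "distinct xs"
proof (rule ccontr)
  assume "\<not> distinct xs"
  then obtain as y bs cs where eq: "xs = as @ [y] @ bs @ [y] @ cs"
    using not_distinct_decomp by blast
  have "walk T (as @ [y])" "walk T (y # cs)"
    using assms(1) walk_append_iff[of T "as" y "bs @ y # cs"]
      walk_append_iff[of T "y # bs" y cs] unfolding eq by auto
  then have "walk T (as @ y # cs)"
    using walk_append_iff by blast
  moreover have "hd (as @ y # cs) = i" "last (as @ y # cs) = j"
    using assms(2,3) unfolding eq by (cases as; cases cs; simp)+
  ultimately have "tdist T i j \<le> length (as @ y # cs) - 1"
    by (rule tdist_le_walk)
  then show False
    using assms(4) unfolding eq by simp
qed

lemma two_le_vdeg:
  assumes "finite {u. (v, u) \<in> T}" "(v, a) \<in> T" "(v, b) \<in> T" "a \<noteq> b"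
  shows "2 \<le> vdeg T v"
  unfolding vdeg_def using card_mono[OF assms(1), of "{a, b}"] assms(2-4) by simp

lemma tdist_le_card_non_leaves:
  assumes "finite V" "T \<subseteq> V \<times> V" "sym T" "reachable T i j"
  shows "tdist T i j \<le> card {v\<in>V. 2 \<le> vdeg T v} + 1"
proof -
  obtain xs where xs: "walk T xs" "hd xs = i" "last xs = j" "length xs = Suc (tdist T i j)"
    using tdist_shortest_walk[OF assms(4)] .
  define d where "d = tdist T i j"
  have "distinct xs"
    using shortest_walk_distinct[OF xs] .
  have step: "(xs ! k, xs ! Suc k) \<in> T" if "k < d" for k
    using xs(1,4) that unfolding walk_def d_def by simp
  have "xs ! k \<in> {v\<in>V. 2 \<le> vdeg T v}" if k: "k \<in> {1..<d}" for k
  proof -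
    have "k - 1 < d"
      using k by (simp add: less_imp_diff_less)
    then have "(xs ! (k - 1), xs ! k) \<in> T"
      using step[of "k - 1"] k by simp
    then have "(xs ! k, xs ! (k - 1)) \<in> T" "(xs ! k, xs ! Suc k) \<in> T"
      using step[of k] k assms(3) by (auto dest: symD)
    moreover have "xs ! (k - 1) \<noteq> xs ! Suc k"
      using \<open>distinct xs\<close> k xs(4) unfolding d_def by (auto simp: nth_eq_iff_index_eq)
    moreover have "finite {u. (xs ! k, u) \<in> T}"
      using assms(1,2) by (auto intro: finite_subset)
    ultimately show ?thesis
      using two_le_vdeg assms(2) by blast
  qed
  then have "nth xs ` {1..<d} \<subseteq> {v\<in>V. 2 \<le> vdeg T v}"
    by blast
  moreover have "inj_on (nth xs) {1..<d}"
    using \<open>distinct xs\<close> xs(4) unfolding d_def by (auto simp: inj_on_def nth_eq_iff_index_eq)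
  ultimately have "d - 1 \<le> card {v\<in>V. 2 \<le> vdeg T v}"
    using card_mono[OF _ \<open>nth xs ` {1..<d} \<subseteq> _\<close>] assms(1) by (simp add: card_image)
  then show ?thesis
    unfolding d_def by simp
qed

lemma admissible_tdist_le:
  assumes G: "graph_on V E" and "finite V" and T: "admissible V E \<delta> T"
    and "i \<in> V" "j \<in> V"
  shows "tdist T i j \<le> card {v\<in>V. 1 < \<delta> v} + 1"
proof -
  have "T \<subseteq> V \<times> V" "sym T" "connected_on V T" and deg: "\<forall>v\<in>V. vdeg T v = \<delta> v"
    using G T unfolding admissible_def spanning_tree_def graph_on_def by auto
  then have "reachable T i j"
    using \<open>i \<in> V\<close> \<open>j \<in> V\<close> unfolding connected_on_iff_reachable by blast
  moreover have "{v\<in>V. 2 \<le> vdeg T v} = {v\<in>V. 1 < \<delta> v}"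
    using deg by auto
  ultimately show ?thesis
    using tdist_le_card_non_leaves[OF \<open>finite V\<close> \<open>T \<subseteq> V \<times> V\<close> \<open>sym T\<close>] by simp
qed

lemma has_cycle_periodic_walk:
  assumes "has_cycle X"
  obtains k and c :: "nat \<Rightarrow> nat" where "3 \<le> k" "\<And>s. c (s mod k) = c s"
    "\<And>s s'. c s = c s' \<Longrightarrow> s mod k = s' mod k" "\<And>s. (c s, c (Suc s)) \<in> X"
proof -
  obtain xs where xs: "walk X xs" "4 \<le> length xs" "hd xs = last xs" "distinct (butlast xs)"
    using assms unfolding has_cycle_def by blast
  define k where "k = length xs - 1"
  define c where "c s = xs ! (s mod k)" for s
  have "3 \<le> k"
    using xs(2) unfolding k_def by simp
  have "xs \<noteq> []"
    using xs(2) by auto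
  then have "xs ! k = xs ! 0"
    using xs(3) unfolding k_def by (simp add: hd_conv_nth last_conv_nth)
  have "(c s, c (Suc s)) \<in> X" for s
  proof -
    have "s mod k < k"
      using \<open>3 \<le> k\<close> by simp
    then have "(xs ! (s mod k), xs ! Suc (s mod k)) \<in> X"
      using xs(1) unfolding walk_def k_def by simp
    moreover have "xs ! Suc (s mod k) = c (Suc s)"
      using \<open>xs ! k = xs ! 0\<close> unfolding c_def by (simp add: mod_Suc)
    ultimately show ?thesis
      unfolding c_def by simp
  qed
  moreover have "s mod k = s' mod k" if "c s = c s'" for s s'
    using that xs(4) \<open>3 \<le> k\<close> unfolding c_def k_def
    by (simp add: nth_butlast[symmetric] nth_eq_iff_index_eq)
  ultimately show thesis
    using that[of k c] \<open>3 \<le> k\<close> unfolding c_def by simp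
qed

lemma pred_mod_neq_Suc_mod:
  fixes k t :: nat
  assumes "3 \<le> k"
  shows "(t + k - 1) mod k \<noteq> Suc t mod k"
proof
  assume "(t + k - 1) mod k = Suc t mod k"
  then have "(t + k - 1 + 2) mod k = (Suc t + 2) mod k"
    by (metis mod_add_left_eq)
  moreover have "t + k - 1 + 2 = Suc t + k"
    using assms by simp
  ultimately have "Suc t mod k = (Suc t + 2) mod k"
    using mod_add_self2[of "Suc t" k] by simp
  then have "k dvd 2"
    using mod_eq_dvd_iff_nat[of "Suc t" "Suc t + 2" k] by simp
  then show False
    using assms by (auto dest: dvd_imp_le)
qed

lemma cycle_vertex_above_neighbours:
  fixes D :: "nat \<Rightarrow> 'a::linorder"
  assumes "has_cycle X"
  obtains a t b where "(a, t) \<in> X" "(t, b) \<in> X" "a \<noteq> b" "D a \<le> D t" "D b \<le> D t"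
proof -
  obtain k and c :: "nat \<Rightarrow> nat" where "3 \<le> k" and c_mod: "\<And>s. c (s mod k) = c s"
    and c_inj: "\<And>s s'. c s = c s' \<Longrightarrow> s mod k = s' mod k" and edge: "\<And>s. (c s, c (Suc s)) \<in> X"
    using has_cycle_periodic_walk[OF assms] by blast
  define M where "M = Max ((\<lambda>s. D (c s)) ` {..<k})"
  have "M \<in> (\<lambda>s. D (c s)) ` {..<k}"
    unfolding M_def using \<open>3 \<le> k\<close> by (intro Max_in) (auto simp: lessThan_empty_iff)
  then obtain t where "D (c t) = M"
    by blast
  moreover have "D (c s) \<le> M" for s
  proof -
    have "D (c s) = D (c (s mod k))"
      using c_mod by simp
    also have "\<dots> \<le> M"
      unfolding M_def using \<open>3 \<le> k\<close> by (intro Max_ge) auto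
    finally show ?thesis .
  qed
  ultimately have t: "D (c s) \<le> D (c t)" for s
    by simp
  have "c (t + k - 1) \<noteq> c (Suc t)"
    using c_inj pred_mod_neq_Suc_mod[OF \<open>3 \<le> k\<close>] by blast
  moreover have "c (Suc (t + k - 1)) = c t"
    using \<open>3 \<le> k\<close> c_mod[of "t + k"] c_mod[of t] by simp
  ultimately show thesis
    using that edge[of "t + k - 1"] edge[of t] t by metis
qed

definition parent_edges :: "(nat \<Rightarrow> nat) \<Rightarrow> nat set \<Rightarrow> (nat \<times> nat) set" where
  "parent_edges p A = (\<lambda>v. (v, p v)) ` A \<union> (\<lambda>v. (p v, v)) ` A"

lemma card_parent_edges:
  fixes D :: "nat \<Rightarrow> 'a::order"
  assumes "finite A" "\<forall>v\<in>A. D (p v) < D v"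
  shows "card (parent_edges p A) = 2 * card A"
proof -
  have "(u, p u) \<noteq> (p v, v)" if "u \<in> A" "v \<in> A" for u v
  proof
    assume "(u, p u) = (p v, v)"
    then have "D v < D u" "D u < D v"
      using assms(2) that by auto
    then show False
      by simp
  qed
  then have "(\<lambda>v. (v, p v)) ` A \<inter> (\<lambda>v. (p v, v)) ` A = {}"
    by blast
  moreover have "card ((\<lambda>v. (v, p v)) ` A) = card A" "card ((\<lambda>v. (p v, v)) ` A) = card A"
    by (auto simp: card_image inj_on_def)
  ultimately show ?thesis
    unfolding parent_edges_def using assms(1) by (simp add: card_Un_disjoint)
qed

lemma parent_edges_descent:
  fixes D :: "nat \<Rightarrow> 'a::order"
  assumes "\<forall>v\<in>A. D (p v) < D v" "(t, u) \<in> parent_edges p A" "D u \<le> D t"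
  shows "u = p t"
proof -
  from assms(2) consider v where "v \<in> A" "(t, u) = (v, p v)" | v where "v \<in> A" "(t, u) = (p v, v)"
    unfolding parent_edges_def by blast
  then show ?thesis
    using assms(1,3) by cases (auto dest: order.strict_trans2)
qed

lemma connected_cycle_card_gt:
  assumes "finite V" "X \<subseteq> V \<times> V" "sym X" "connected_on V X" "has_cycle X"
  shows "2 * (card V - 1) < card X"
proof -
  obtain xs where "walk X xs" "4 \<le> length xs"
    using assms(5) unfolding has_cycle_def by blast
  then have "(xs ! 0, xs ! 1) \<in> X"
    unfolding walk_def by simp
  then obtain r where "r \<in> V"
    using assms(2) by blast
  define D where "D v = tdist X v r" for v
  have "\<exists>u. (v, u) \<in> X \<and> D u < D v" if "v \<in> V - {r}" for v
    using reachable_closer_neighbour[of X v r] assms(4) \<open>r \<in> V\<close> that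
    unfolding connected_on_iff_reachable D_def by (metis DiffE singletonI)
  then obtain p where p: "\<forall>v\<in>V - {r}. (v, p v) \<in> X \<and> D (p v) < D v"
    by metis
  \<comment> \<open>p is the parent map of a shortest-path tree rooted at r\<close>
  let ?P = "parent_edges p (V - {r})"
  have "card ?P = 2 * (card V - 1)"
    using card_parent_edges[of "V - {r}" D p] p assms(1) \<open>r \<in> V\<close> by simp
  have "?P \<subseteq> X"
    unfolding parent_edges_def using p assms(3) by (auto dest: symD)
  obtain a t b where "(a, t) \<in> X" "(t, b) \<in> X" "a \<noteq> b" "D a \<le> D t" "D b \<le> D t"
    using cycle_vertex_above_neighbours[OF assms(5)] .
  moreover have "(t, a) \<in> X"
    using \<open>(a, t) \<in> X\<close> assms(3) by (auto dest: symD)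
  \<comment> \<open>the two cycle edges at t cannot both lead to the parent of t\<close>
  ultimately obtain e where "e \<in> X" "e \<notin> ?P"
    using parent_edges_descent[of "V - {r}" D p] p by metis
  have "finite X"
    using assms(1,2) finite_subset by blast
  then have "card (insert e ?P) \<le> card X"
    using \<open>e \<in> X\<close> \<open>?P \<subseteq> X\<close> by (intro card_mono) auto
  moreover have "finite ?P"
    using \<open>finite X\<close> \<open>?P \<subseteq> X\<close> finite_subset by blast
  ultimately show ?thesis
    using \<open>e \<notin> ?P\<close> \<open>card ?P = _\<close> by simp
qed

lemma card_eq_sum_vdeg:
  assumes "finite V" "X \<subseteq> V \<times> V"
  shows "card X = (\<Sum>i\<in>V. vdeg X i)"
proof -
  have "X = Sigma V (\<lambda>i. {j. (i, j) \<in> X})"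
    using assms(2) by auto
  moreover have "finite {j. (i, j) \<in> X}" for i
    using assms by (auto intro: finite_subset)
  ultimately show ?thesis
    unfolding vdeg_def using assms(1) by (metis card_SigmaI)
qed

abbreviation selected_edges :: "(nat \<times> nat) set \<Rightarrow> (nat \<Rightarrow> nat \<Rightarrow> real) \<Rightarrow> (nat \<times> nat) set" where
  "selected_edges E x \<equiv> {(i, j)\<in>E. x i j = 1}"

lemma F2Q_feasibleD:
  assumes "F2Q_feasible n E \<delta> L x w"
  shows F2Q_x_binary: "\<And>i j. (i, j) \<in> E \<Longrightarrow> x i j \<in> {0, 1}"
    and F2Q_x_sym: "\<And>i j. (i, j) \<in> E \<Longrightarrow> x i j = x j i"
    and F2Q_w_sym: "\<And>i j l. i \<in> {1..n} \<Longrightarrow> j \<in> {1..n} \<Longrightarrow> i \<noteq> j \<Longrightarrow> l \<in> {1..L} \<Longrightarrow>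
      w l i j = w l j i"
    and F2Q_w_bounded: "\<And>i j l. i \<in> {1..n} \<Longrightarrow> j \<in> {1..n} \<Longrightarrow> i \<noteq> j \<Longrightarrow> l \<in> {1..L} \<Longrightarrow>
      0 \<le> w l i j \<and> w l i j \<le> 1"
    and F2Q_w1_edge: "\<And>i j. (i, j) \<in> E \<Longrightarrow> w 1 i j = x i j"
    and F2Q_w1_nonedge: "\<And>i j. i \<in> {1..n} \<Longrightarrow> j \<in> {1..n} \<Longrightarrow> i < j \<Longrightarrow> (i, j) \<notin> E \<Longrightarrow> w 1 i j = 0"
    and F2Q_w_edge: "\<And>i j l. (i, j) \<in> E \<Longrightarrow> i < j \<Longrightarrow> l \<in> {2..L} \<Longrightarrow>
      w l i j \<le> x i j + (\<Sum>k\<in>{k\<in>{1..n}. k \<noteq> j \<and> (i, k) \<in> E}. x i k * w (l - 1) k j)"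
    and F2Q_w_nonedge: "\<And>i j l. i \<in> {1..n} \<Longrightarrow> j \<in> {1..n} \<Longrightarrow> i < j \<Longrightarrow> (i, j) \<notin> E \<Longrightarrow>
      l \<in> {2..L} \<Longrightarrow> w l i j \<le> (\<Sum>k\<in>{k\<in>{1..n}. k \<noteq> j \<and> (i, k) \<in> E}. x i k * w (l - 1) k j)"
    and F2Q_w_last: "\<And>i j. i \<in> {1..n} \<Longrightarrow> j \<in> {1..n} \<Longrightarrow> i < j \<Longrightarrow> w L i j = 1"
    and F2Q_degree: "\<And>i. i \<in> {1..n} \<Longrightarrow> (\<Sum>j\<in>{j\<in>{1..n}. (i, j) \<in> E}. x i j) = real (\<delta> i)"
  using assms unfolding F2Q_feasible_def by (auto dest: bspec)

lemma F2Q_selected_edges_sym: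
  assumes F: "F2Q_feasible n E \<delta> L x w" and "sym E"
  shows "sym (selected_edges E x)"
proof (rule symI)
  fix i j assume "(i, j) \<in> selected_edges E x"
  then show "(j, i) \<in> selected_edges E x"
    using F2Q_x_sym[OF F, of i j] \<open>sym E\<close> by (auto dest: symD)
qed

lemma F2Q_positive_level_cases:
  assumes F: "F2Q_feasible n E \<delta> L x w"
    and ij: "i \<in> {1..n}" "j \<in> {1..n}" "i < j" and l: "l \<in> {1..L}" and pos: "0 < w l i j"
  shows "(i, j) \<in> selected_edges E x \<or>
    (\<exists>k\<in>{1..n}. k \<noteq> j \<and> (i, k) \<in> selected_edges E x \<and> 0 < w (l - 1) k j \<and> 2 \<le> l)"
proof (cases "(i, j) \<in> selected_edges E x")
  case False
  define K where "K = {k\<in>{1..n}. k \<noteq> j \<and> (i, k) \<in> E}"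
  have "l \<noteq> 1"
    using False pos F2Q_w1_nonedge[OF F ij] F2Q_w1_edge[OF F] F2Q_x_binary[OF F] by fastforce
  then have "l \<in> {2..L}"
    using l by simp
  have "x i j = 0" if "(i, j) \<in> E"
    using False that F2Q_x_binary[OF F that] by auto
  then have "0 < (\<Sum>k\<in>K. x i k * w (l - 1) k j)"
    using pos F2Q_w_edge[OF F _ ij(3) \<open>l \<in> {2..L}\<close>] F2Q_w_nonedge[OF F ij _ \<open>l \<in> {2..L}\<close>]
    unfolding K_def by (cases "(i, j) \<in> E") fastforce+
  then obtain k where k: "k \<in> K" "0 < x i k * w (l - 1) k j"
    by (meson not_le sum_nonpos)
  then have "x i k = 1"
    using F2Q_x_binary[OF F] unfolding K_def by fastforce
  then show ?thesis
    using k \<open>l \<in> {2..L}\<close> unfolding K_def by auto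
qed simp

lemma F2Q_positive_level_tdist:
  assumes F: "F2Q_feasible n E \<delta> L x w" and G: "graph_on {1..n} E"
  shows "l \<in> {1..L} \<Longrightarrow> i \<in> {1..n} \<Longrightarrow> j \<in> {1..n} \<Longrightarrow> i \<noteq> j \<Longrightarrow> 0 < w l i j \<Longrightarrow>
    reachable (selected_edges E x) i j \<and> tdist (selected_edges E x) i j \<le> l"
proof (induction l arbitrary: i j)
  case (Suc l)
  let ?X = "selected_edges E x"
  have ordered: "reachable ?X a b \<and> tdist ?X a b \<le> Suc l"
    if ab: "a \<in> {1..n}" "b \<in> {1..n}" "a < b" "0 < w (Suc l) a b" for a b
    using F2Q_positive_level_cases[OF F ab(1-3) Suc.prems(1) ab(4)]
  proof (elim disjE bexE conjE)
    assume "(a, b) \<in> ?X"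
    then have "reachable ?X a b" "tdist ?X a b \<le> 1"
      using reachable_Cons[of a b ?X b] tdist_edge_le[of a b ?X] by simp_all
    then show ?thesis
      by simp
  next
    fix k assume k: "k \<in> {1..n}" "k \<noteq> b" "(a, k) \<in> ?X" "0 < w (Suc l - 1) k b" "2 \<le> Suc l"
    moreover have "l \<in> {1..L}"
      using Suc.prems(1) k(5) by simp
    ultimately have "reachable ?X k b \<and> tdist ?X k b \<le> l"
      using Suc.IH[of k b] ab(2) by simp
    then show ?thesis
      using reachable_Cons[OF k(3), of b] tdist_Cons_le[OF k(3), of b] by auto
  qed
  have "sym ?X"
    using F2Q_selected_edges_sym[OF F] G unfolding graph_on_def by blast
  show ?case
  proof (cases "i < j")
    case True
    then show ?thesis
      using ordered Suc.prems by blast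
  next
    case False
    then have ji: "reachable ?X j i" "tdist ?X j i \<le> Suc l"
      using ordered[of j i] F2Q_w_sym[OF F Suc.prems(2-4,1)] Suc.prems by auto
    then show ?thesis
      using reachable_sym[OF \<open>sym ?X\<close> ji(1)] tdist_sym[OF \<open>sym ?X\<close> ji(1)] by simp
  qed
qed simp

lemma sum_of_bool_levels:
  assumes "1 \<le> d" "d \<le> L"
  shows "(\<Sum>l\<in>{1..L-1}. of_bool (d \<le> l) :: real) = real L - real d"
proof -
  have "{1..L-1} \<inter> {l. d \<le> l} = {d..L-1}"
    using assms(1) by auto
  then show ?thesis
    using assms by simp
qed

lemma F2Q_w_last_eq_1:
  assumes F: "F2Q_feasible n E \<delta> L x w" and "1 \<le> L"
    and ij: "i \<in> {1..n}" "j \<in> {1..n}" "i \<noteq> j"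
  shows "w L i j = 1"
proof (cases "i < j")
  case False
  then have "w L j i = 1"
    using F2Q_w_last[OF F ij(2,1)] ij(3) by simp
  then show ?thesis
    using F2Q_w_sym[OF F ij, of L] \<open>1 \<le> L\<close> by simp
qed (use F2Q_w_last[OF F ij(1,2)] in blast)

lemma F2Q_w_le_tdist_indicator:
  assumes F: "F2Q_feasible n E \<delta> L x w" and G: "graph_on {1..n} E"
    and ij: "i \<in> {1..n}" "j \<in> {1..n}" "i \<noteq> j" and l: "l \<in> {1..L}"
  shows "w l i j \<le> of_bool (tdist (selected_edges E x) i j \<le> l)"
proof (cases "0 < w l i j")
  case True
  then have "tdist (selected_edges E x) i j \<le> l"
    using F2Q_positive_level_tdist[OF F G l ij] by blast
  then show ?thesis
    using F2Q_w_bounded[OF F ij l] by simp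
qed simp

lemma F2Q_tdist_bound:
  assumes F: "F2Q_feasible n E \<delta> L x w" and G: "graph_on {1..n} E" and "1 \<le> L"
    and ij: "i \<in> {1..n}" "j \<in> {1..n}" "i \<noteq> j"
  shows "reachable (selected_edges E x) i j"
    and "real (tdist (selected_edges E x) i j) \<le> real L - (\<Sum>l\<in>{1..L-1}. w l i j)"
proof -
  let ?X = "selected_edges E x"
  have reach: "reachable ?X i j" and "tdist ?X i j \<le> L"
    using F2Q_positive_level_tdist[OF F G _ ij, of L] F2Q_w_last_eq_1[OF F \<open>1 \<le> L\<close> ij]
      \<open>1 \<le> L\<close> by auto
  then show "reachable ?X i j"
    by simp
  have "1 \<le> tdist ?X i j"
    using tdist_eq_0_iff[OF reach] ij(3) by simp
  have "(\<Sum>l\<in>{1..L-1}. w l i j) \<le> (\<Sum>l\<in>{1..L-1}. of_bool (tdist ?X i j \<le> l))"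
    by (rule sum_mono, rule F2Q_w_le_tdist_indicator[OF F G ij]) auto
  also have "\<dots> = real L - real (tdist ?X i j)"
    using \<open>1 \<le> tdist ?X i j\<close> \<open>tdist ?X i j \<le> L\<close> by (rule sum_of_bool_levels)
  finally show "real (tdist ?X i j) \<le> real L - (\<Sum>l\<in>{1..L-1}. w l i j)"
    by simp
qed

lemma F2Q_vdeg_selected_edges:
  assumes F: "F2Q_feasible n E \<delta> L x w" and G: "graph_on {1..n} E" and i: "i \<in> {1..n}"
  shows "vdeg (selected_edges E x) i = \<delta> i"
proof -
  define A where "A = {j\<in>{1..n}. (i, j) \<in> E}"
  have "real (\<delta> i) = (\<Sum>j\<in>A. x i j)"
    using F2Q_degree[OF F i] unfolding A_def by simp
  also have "\<dots> = (\<Sum>j\<in>A. of_bool (x i j = 1))"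
    using F2Q_x_binary[OF F] unfolding A_def by (intro sum.cong) auto
  also have "\<dots> = real (card (A \<inter> {j. x i j = 1}))"
    unfolding A_def by simp
  also have "A \<inter> {j. x i j = 1} = {j. (i, j) \<in> selected_edges E x}"
    using G unfolding A_def graph_on_def by auto
  finally show ?thesis
    unfolding vdeg_def by linarith
qed

lemma F2Q_selected_edges_admissible:
  assumes F: "F2Q_feasible n E \<delta> L x w" and G: "graph_on {1..n} E" and "1 \<le> L"
    and \<delta>_sum: "(\<Sum>i\<in>{1..n}. \<delta> i) = 2 * (n - 1)"
  shows "admissible {1..n} E \<delta> (selected_edges E x)"
proof -
  let ?X = "selected_edges E x"
  have sub: "?X \<subseteq> {1..n} \<times> {1..n}" and "sym ?X"
    using G F2Q_selected_edges_sym[OF F] unfolding graph_on_def by auto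
  have conn: "connected_on {1..n} ?X"
    unfolding connected_on_iff_reachable
  proof (intro ballI)
    fix i j assume "i \<in> {1..n}" "j \<in> {1..n}"
    then show "reachable ?X i j"
      using F2Q_tdist_bound(1)[OF F G \<open>1 \<le> L\<close>, of i j] by (cases "i = j") simp_all
  qed
  have deg: "\<forall>i\<in>{1..n}. vdeg ?X i = \<delta> i"
    using F2Q_vdeg_selected_edges[OF F G] by blast
  have "card ?X = (\<Sum>i\<in>{1..n}. \<delta> i)"
    using card_eq_sum_vdeg[OF _ sub] deg by simp
  then have "card ?X = 2 * (card {1..n} - 1)"
    using \<delta>_sum by simp
  then have "\<not> has_cycle ?X"
    using connected_cycle_card_gt[OF _ sub \<open>sym ?X\<close> conn] by auto
  moreover have "?X \<subseteq> E"
    by blast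
  ultimately show ?thesis
    unfolding admissible_def spanning_tree_def using \<open>sym ?X\<close> conn deg by blast
qed

lemma CA_le_F2Q_obj:
  assumes F: "F2Q_feasible n E \<delta> L x w" and G: "graph_on {1..n} E" and "1 \<le> L"
    and \<mu>: "\<forall>i\<in>{1..n}. \<forall>j\<in>{1..n}. i \<noteq> j \<longrightarrow> 0 \<le> \<mu> i j"
  shows "CA {1..n} \<mu> (selected_edges E x) \<le> F2Q_obj n \<mu> L w"
  unfolding F2Q_obj_def CA_def
proof (intro sum_mono)
  fix i j assume "i \<in> {1..n}" "j \<in> {1..n} - {i}"
  then have ij: "i \<in> {1..n}" "j \<in> {1..n}" "i \<noteq> j"
    by auto
  then have "real (tdist (selected_edges E x) i j) \<le> real L - (\<Sum>l\<in>{1..L-1}. w l i j)"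
    by (rule F2Q_tdist_bound(2)[OF F G \<open>1 \<le> L\<close>])
  moreover have "0 \<le> \<mu> i j"
    using \<mu> ij by blast
  ultimately show "\<mu> i j * real (tdist (selected_edges E x) i j) \<le> \<mu> i j * (real L - (\<Sum>l\<in>{1..L-1}. w l i j))"
    by (rule mult_left_mono)
qed

definition tree_x :: "(nat \<times> nat) set \<Rightarrow> nat \<Rightarrow> nat \<Rightarrow> real" where
  "tree_x T i j = of_bool ((i, j) \<in> T)"

definition tree_w :: "(nat \<times> nat) set \<Rightarrow> nat \<Rightarrow> nat \<Rightarrow> nat \<Rightarrow> real" where
  "tree_w T l i j = of_bool (tdist T i j \<le> l)"

lemma selected_edges_tree_x: "T \<subseteq> E \<Longrightarrow> selected_edges E (tree_x T) = T"
  by (auto simp: tree_x_def)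

lemma tree_w_recursion:
  assumes "T \<subseteq> E" "E \<subseteq> {1..n} \<times> {1..n}" "connected_on {1..n} T"
    and ij: "i \<in> {1..n}" "j \<in> {1..n}" "i \<noteq> j"
  shows "tree_w T l i j \<le>
    tree_x T i j + (\<Sum>k\<in>{k\<in>{1..n}. k \<noteq> j \<and> (i, k) \<in> E}. tree_x T i k * tree_w T (l - 1) k j)"
    (is "_ \<le> _ + ?S")
proof -
  have "0 \<le> ?S"
    by (intro sum_nonneg) (simp add: tree_x_def tree_w_def)
  moreover have "1 \<le> ?S" if "tdist T i j \<le> l" "(i, j) \<notin> T"
  proof -
    have "reachable T i j"
      using assms(3) ij unfolding connected_on_iff_reachable by blast
    then obtain k where k: "(i, k) \<in> T" "tdist T k j < tdist T i j"
      using reachable_closer_neighbour ij(3) by blast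
    then have "k \<in> {k\<in>{1..n}. k \<noteq> j \<and> (i, k) \<in> E}"
      using that(2) assms(1,2) by auto
    then have "tree_x T i k * tree_w T (l - 1) k j \<le> ?S"
      by (intro member_le_sum) (auto simp: tree_x_def tree_w_def)
    moreover have "tree_x T i k * tree_w T (l - 1) k j = 1"
      using k that(1) by (simp add: tree_x_def tree_w_def)
    ultimately show ?thesis
      by simp
  qed
  ultimately show ?thesis
    by (cases "tdist T i j \<le> l"; cases "(i, j) \<in> T") (auto simp: tree_w_def tree_x_def)
qed

lemma tree_w_1_eq_tree_x:
  assumes "connected_on V T" "i \<in> V" "j \<in> V" "i \<noteq> j"
  shows "tree_w T 1 i j = tree_x T i j"
  using tdist_le_1_iff[of T i j] assms unfolding connected_on_iff_reachable
  by (simp add: tree_w_def tree_x_def)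

lemma tree_x_degree:
  assumes G: "graph_on {1..n} E" and T: "admissible {1..n} E \<delta> T" and i: "i \<in> {1..n}"
  shows "(\<Sum>j\<in>{j\<in>{1..n}. (i, j) \<in> E}. tree_x T i j) = real (\<delta> i)"
proof -
  have "{j\<in>{1..n}. (i, j) \<in> E} \<inter> {j. (i, j) \<in> T} = {j. (i, j) \<in> T}"
    using G T unfolding graph_on_def admissible_def spanning_tree_def by auto
  then show ?thesis
    using T i unfolding admissible_def tree_x_def vdeg_def by simp
qed

lemma tree_solution_feasible:
  assumes G: "graph_on {1..n} E" and T: "admissible {1..n} E \<delta> T"
    and L: "card {i\<in>{1..n}. 1 < \<delta> i} < L"
  shows "F2Q_feasible n E \<delta> L (tree_x T) (tree_w T)"
  unfolding F2Q_feasible_def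
proof (intro conjI)
  have EV: "E \<subseteq> {1..n} \<times> {1..n}" and loopfree: "\<And>i. (i, i) \<notin> E"
    using G unfolding graph_on_def by auto
  have TE: "T \<subseteq> E" and "sym T" and conn: "connected_on {1..n} T"
    using T unfolding admissible_def spanning_tree_def by auto
  have recursion: "tree_w T l i j \<le>
      tree_x T i j + (\<Sum>k\<in>{k\<in>{1..n}. k \<noteq> j \<and> (i, k) \<in> E}. tree_x T i k * tree_w T (l - 1) k j)"
    if "i \<in> {1..n}" "j \<in> {1..n}" "i < j" for i j l
    using tree_w_recursion[OF TE EV conn] that by simp
  show "\<forall>(i, j)\<in>E. tree_x T i j \<in> {0, 1} \<and> tree_x T i j = tree_x T j i"
    using \<open>sym T\<close> by (auto simp: tree_x_def dest: symD)
  show "\<forall>i\<in>{1..n}. \<forall>j\<in>{1..n}. i \<noteq> j \<longrightarrow> (\<forall>l\<in>{1..L}.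
      tree_w T l i j = tree_w T l j i \<and> 0 \<le> tree_w T l i j \<and> tree_w T l i j \<le> 1)"
    using tdist_sym[OF \<open>sym T\<close>] conn unfolding connected_on_iff_reachable by (simp add: tree_w_def)
  show "\<forall>(i, j)\<in>E. tree_w T 1 i j = tree_x T i j"
    using tree_w_1_eq_tree_x[OF conn] EV loopfree by blast
  show "\<forall>i\<in>{1..n}. \<forall>j\<in>{1..n}. i < j \<and> (i, j) \<notin> E \<longrightarrow> tree_w T 1 i j = 0"
    using tree_w_1_eq_tree_x[OF conn] TE by (auto simp: tree_x_def)
  show "\<forall>(i, j)\<in>E. i < j \<longrightarrow> (\<forall>l\<in>{2..L}. tree_w T l i j \<le>
      tree_x T i j + (\<Sum>k\<in>{k\<in>{1..n}. k \<noteq> j \<and> (i, k) \<in> E}. tree_x T i k * tree_w T (l - 1) k j))"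
    using recursion EV by blast
  show "\<forall>i\<in>{1..n}. \<forall>j\<in>{1..n}. i < j \<and> (i, j) \<notin> E \<longrightarrow> (\<forall>l\<in>{2..L}.
      tree_w T l i j \<le> (\<Sum>k\<in>{k\<in>{1..n}. k \<noteq> j \<and> (i, k) \<in> E}. tree_x T i k * tree_w T (l - 1) k j))"
  proof (intro ballI impI)
    fix i j l assume ij: "i \<in> {1..n}" "j \<in> {1..n}" "i < j \<and> (i, j) \<notin> E"
    then have "tree_x T i j = 0"
      using TE by (auto simp: tree_x_def)
    then show "tree_w T l i j \<le>
        (\<Sum>k\<in>{k\<in>{1..n}. k \<noteq> j \<and> (i, k) \<in> E}. tree_x T i k * tree_w T (l - 1) k j)"
      using recursion[of i j l] ij by simp
  qed
  show "\<forall>i\<in>{1..n}. \<forall>j\<in>{1..n}. i < j \<longrightarrow> tree_w T L i j = 1"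
    using admissible_tdist_le[OF G _ T] L by (fastforce simp: tree_w_def)
  show "\<forall>i\<in>{1..n}. (\<Sum>j\<in>{j\<in>{1..n}. (i, j) \<in> E}. tree_x T i j) = real (\<delta> i)"
    using tree_x_degree[OF G T] by blast
qed

lemma tree_solution_objective:
  assumes G: "graph_on {1..n} E" and T: "admissible {1..n} E \<delta> T"
    and L: "card {i\<in>{1..n}. 1 < \<delta> i} < L"
  shows "F2Q_obj n \<mu> L (tree_w T) = CA {1..n} \<mu> T"
  unfolding F2Q_obj_def CA_def
proof (intro sum.cong refl)
  fix i j assume "i \<in> {1..n}" "j \<in> {1..n} - {i}"
  then have ij: "i \<in> {1..n}" "j \<in> {1..n}" "i \<noteq> j"
    by auto
  have "reachable T i j"
    using T ij unfolding admissible_def spanning_tree_def connected_on_iff_reachable by blast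
  then have "tdist T i j \<noteq> 0"
    using tdist_eq_0_iff ij(3) by simp
  then have "1 \<le> tdist T i j"
    by simp
  moreover have "tdist T i j \<le> L"
    using admissible_tdist_le[OF G _ T ij(1,2)] L by simp
  ultimately have "(\<Sum>l\<in>{1..L-1}. tree_w T l i j) = real L - real (tdist T i j)"
    unfolding tree_w_def by (rule sum_of_bool_levels)
  then show "\<mu> i j * (real L - (\<Sum>l\<in>{1..L-1}. tree_w T l i j)) = \<mu> i j * real (tdist T i j)"
    by simp
qed

lemma optimal_tree_exists:
  assumes "finite E" "\<exists>T. admissible V E \<delta> T"
  obtains T where "optimal_tree V E \<delta> \<mu> T"
proof -
  have "{T. admissible V E \<delta> T} \<subseteq> Pow E"
    unfolding admissible_def spanning_tree_def by auto
  then have "finite {T. admissible V E \<delta> T}"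
    using assms(1) finite_subset by blast
  then obtain T where "is_arg_min (CA V \<mu>) (\<lambda>T. T \<in> {T. admissible V E \<delta> T}) T"
    using ex_is_arg_min_if_finite assms(2) by blast
  then show thesis
    using that unfolding is_arg_min_linorder optimal_tree_def by auto
qed

lemma optimal_tree_F2Q_obj_le:
  assumes G: "graph_on {1..n} E" and opt: "optimal_tree {1..n} E \<delta> \<mu> T"
    and L: "card {i\<in>{1..n}. 1 < \<delta> i} < L" and \<delta>_sum: "(\<Sum>i\<in>{1..n}. \<delta> i) = 2 * (n - 1)"
    and \<mu>: "\<forall>i\<in>{1..n}. \<forall>j\<in>{1..n}. i \<noteq> j \<longrightarrow> 0 \<le> \<mu> i j"
    and F: "F2Q_feasible n E \<delta> L x w"
  shows "F2Q_obj n \<mu> L (tree_w T) \<le> F2Q_obj n \<mu> L w"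
proof -
  have "1 \<le> L" and T: "admissible {1..n} E \<delta> T"
    using L opt unfolding optimal_tree_def by auto
  have "F2Q_obj n \<mu> L (tree_w T) = CA {1..n} \<mu> T"
    using tree_solution_objective[OF G T L] .
  also have "\<dots> \<le> CA {1..n} \<mu> (selected_edges E x)"
    using opt F2Q_selected_edges_admissible[OF F G \<open>1 \<le> L\<close> \<delta>_sum]
    unfolding optimal_tree_def by (elim conjE allE impE)
  also have "\<dots> \<le> F2Q_obj n \<mu> L w"
    using CA_le_F2Q_obj[OF F G \<open>1 \<le> L\<close> \<mu>] .
  finally show ?thesis .
qed

theorem proposition2:
  fixes n :: nat and E :: "(nat \<times> nat) set" and \<mu> :: "nat \<Rightarrow> nat \<Rightarrow> real"
    and \<delta> :: "nat \<Rightarrow> nat" and m L :: nat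
  assumes G: "graph_on {1..n} E"
    and mu_sym: "\<forall>i\<in>{1..n}. \<forall>j\<in>{1..n}. i \<noteq> j \<longrightarrow> \<mu> i j = \<mu> j i \<and> 0 \<le> \<mu> i j"
    and delta_pos: "\<forall>i\<in>{1..n}. 0 < \<delta> i"
    and delta_sum: "(\<Sum>i\<in>{1..n}. \<delta> i) = 2 * (n - 1)"
    and adm: "\<exists>T. admissible {1..n} E \<delta> T"
    and m_def: "m = card {i\<in>{1..n}. 1 < \<delta> i}"
    and L_def: "L = m + 2"
  shows "\<exists>x w. F2Q_feasible n E \<delta> L x w \<and>
           (\<forall>x' w'. F2Q_feasible n E \<delta> L x' w' \<longrightarrow> F2Q_obj n \<mu> L w \<le> F2Q_obj n \<mu> L w') \<and>
           optimal_tree {1..n} E \<delta> \<mu> {(i, j)\<in>E. x i j = 1} \<and>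
           F2Q_obj n \<mu> L w = CA {1..n} \<mu> {(i, j)\<in>E. x i j = 1}"
proof -
  have "finite E"
    using G unfolding graph_on_def by (meson finite_SigmaI finite_atLeastAtMost finite_subset)
  then obtain T where opt: "optimal_tree {1..n} E \<delta> \<mu> T"
    using optimal_tree_exists adm by blast
  then have T: "admissible {1..n} E \<delta> T" and "T \<subseteq> E"
    unfolding optimal_tree_def admissible_def spanning_tree_def by auto
  have L: "card {i\<in>{1..n}. 1 < \<delta> i} < L"
    using m_def L_def by simp
  have "\<forall>i\<in>{1..n}. \<forall>j\<in>{1..n}. i \<noteq> j \<longrightarrow> 0 \<le> \<mu> i j"
    using mu_sym by blast
  then have "\<forall>x' w'. F2Q_feasible n E \<delta> L x' w' \<longrightarrow> F2Q_obj n \<mu> L (tree_w T) \<le> F2Q_obj n \<mu> L w'"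
    using optimal_tree_F2Q_obj_le[OF G opt L delta_sum] by simp
  then show ?thesis
    using tree_solution_feasible[OF G T L] tree_solution_objective[OF G T L]
      selected_edges_tree_x[OF \<open>T \<subseteq> E\<close>] opt
    by (intro exI[of _ "tree_x T"] exI[of _ "tree_w T"]) simp
qed

end
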